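(* For an affine lattice ${\mathcal L}\subset\mathbb{R}^n$ write ${\mathcal L}_0={\mathcal L}-{\mathcal L}$ for the lattice of which it is a translate. Let $g\in G$. Then $(\mathbb{Z}^ng)_0\cap(\{{\bf 0}\}\times\mathbb{R}^m)\subset(\mathbb{Z}^nhg)_0\cap(\{{\bf 0}\}\times\mathbb{R}^m)$ for all $h\in H_g$, and these two sets are equal for almost all $h\in H_g$ (with respect to Haar measure on $H_g$).
   Context: $n=d+m$, $\mathbb{R}^n=\mathbb{R}^d\times\mathbb{R}^m$. $G=\operatorname{ASL}(n,\mathbb{R})$ with $(M,{\boldsymbol\xi})(M',{\boldsymbol\xi}')=(MM',{\boldsymbol\xi}M'+{\boldsymbol\xi}')$, acting on row vectors by ${\boldsymbol y}\mapsto{\boldsymbol y}M+{\boldsymbol\xi}$; $\Gamma=\operatorname{ASL}(n,\mathbb{Z})$. $\varphi_g(A,{\boldsymbol x})=g\bigl(\operatorname{diag}(A,1_m),({\boldsymbol x},{\bf 0})\bigr)g^{-1}$ for $(A,{\boldsymbol x})\in\operatorname{ASL}(d,\mathbb{R})$. $H_g$ is the unique closed connected subgroup of $G$ such that $\Gamma\cap H_g$ is a lattice in $H_g$, $\varphi_g(\operatorname{SL}(d,\mathbb{R}))\subset H_g$, and the closure of $\Gamma\backslash\Gamma\varphi_g(\operatorname{SL}(d,\mathbb{R}))$ in $\Gamma\backslash G$ is $\Gamma\backslash\Gamma H_g$. *)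

theory Defs
  imports "HOL-Analysis.Analysis"
begin

text \<open>Elements of ASL(n,R) are pairs (M, xi) of an n x n real matrix and a row vector.
  The index type 'n of R^n is arbitrary finite; in the statement it is 'd + 'm,
  so that R^n = R^d x R^m (Inl-coordinates = R^d part, Inr-coordinates = R^m part).\<close>

type_synonym 'n asl = "(real^'n^'n) \<times> (real^'n)"

definition asl_mult :: "'n::finite asl \<Rightarrow> 'n asl \<Rightarrow> 'n asl" where
  "asl_mult g g' = (fst g ** fst g', (snd g v* fst g') + snd g')"

definition asl_one :: "'n::finite asl" where
  "asl_one = (mat 1, 0)"

definition asl_inv :: "'n::finite asl \<Rightarrow> 'n asl" where
  "asl_inv g = (matrix_inv (fst g), - (snd g v* matrix_inv (fst g)))"

definition asl_act :: "real^'n \<Rightarrow> 'n::finite asl \<Rightarrow> real^'n" where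
  "asl_act y g = (y v* fst g) + snd g"

definition ASL_R :: "'n::finite asl set" where
  "ASL_R = {g. det (fst g) = 1}"

definition ASL_Z :: "'n::finite asl set" where
  "ASL_Z = {g \<in> ASL_R. (\<forall>i j. fst g $ i $ j \<in> \<int>) \<and> (\<forall>i. snd g $ i \<in> \<int>)}"

definition int_vecs :: "(real^'n::finite) set" where
  "int_vecs = {k. \<forall>i. k $ i \<in> \<int>}"

definition lattice_orbit :: "'n::finite asl \<Rightarrow> (real^'n) set" where
  "lattice_orbit g = (\<lambda>k. asl_act k g) ` int_vecs"

definition diff_set :: "(real^'n::finite) set \<Rightarrow> (real^'n) set" where
  "diff_set L = {a - b | a b. a \<in> L \<and> b \<in> L}"

definition zero_first :: "(real^('d::finite + 'm::finite)) set" where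
  "zero_first = {y. \<forall>a. y $ Inl a = 0}"

definition embed_block :: "real^'d^'d \<Rightarrow> real^'d \<Rightarrow> ('d::finite + 'm::finite) asl" where
  "embed_block A x =
     ((\<chi> i j. case (i, j) of
         (Inl a, Inl b) \<Rightarrow> A $ a $ b
       | (Inr a, Inr b) \<Rightarrow> (if a = b then 1 else 0)
       | _ \<Rightarrow> 0),
      (\<chi> i. case i of Inl a \<Rightarrow> x $ a | Inr _ \<Rightarrow> 0))"

definition phi :: "('d::finite + 'm::finite) asl \<Rightarrow> real^'d^'d \<Rightarrow> real^'d \<Rightarrow> ('d + 'm) asl" where
  "phi g A x = asl_mult (asl_mult g (embed_block A x)) (asl_inv g)"

definition SL_image :: "('d::finite + 'm::finite) asl \<Rightarrow> ('d + 'm) asl set" where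
  "SL_image g = {phi g A 0 | A. det A = 1}"

definition asl_subgroup :: "'n::finite asl set \<Rightarrow> bool" where
  "asl_subgroup H \<longleftrightarrow> H \<subseteq> ASL_R \<and> asl_one \<in> H \<and>
     (\<forall>a\<in>H. \<forall>b\<in>H. asl_mult a b \<in> H) \<and> (\<forall>a\<in>H. asl_inv a \<in> H)"

definition set_prod :: "'n::finite asl set \<Rightarrow> 'n asl set \<Rightarrow> 'n asl set" where
  "set_prod A B = {asl_mult a b | a b. a \<in> A \<and> b \<in> B}"

definition haar_measure :: "'n::finite asl set \<Rightarrow> 'n asl measure \<Rightarrow> bool" where
  "haar_measure H \<mu> \<longleftrightarrow>
     sets \<mu> = sets (restrict_space borel H) \<and>
     (\<forall>h\<in>H. \<forall>A\<in>sets \<mu>. emeasure \<mu> ((\<lambda>x. asl_mult h x) ` A) = emeasure \<mu> A) \<and>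
     (\<forall>K. K \<subseteq> H \<and> compact K \<longrightarrow> emeasure \<mu> K < \<infinity>) \<and>
     (\<forall>U. openin (top_of_set H) U \<and> U \<noteq> {} \<longrightarrow> emeasure \<mu> U > 0)"

definition lattice_in :: "'n::finite asl set \<Rightarrow> 'n asl set \<Rightarrow> bool" where
  "lattice_in \<Lambda> H \<longleftrightarrow> \<Lambda> \<subseteq> H \<and> asl_subgroup \<Lambda> \<and>
     (\<forall>\<gamma>\<in>\<Lambda>. \<exists>e>0. ball \<gamma> e \<inter> \<Lambda> = {\<gamma>}) \<and>
     (\<exists>\<mu> F. haar_measure H \<mu> \<and> F \<in> sets \<mu> \<and>
        (\<forall>h\<in>H. \<exists>!\<gamma>. \<gamma> \<in> \<Lambda> \<and> asl_mult \<gamma> h \<in> F) \<and> emeasure \<mu> F < \<infinity>)"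

text \<open>The closure condition in Gamma\G is expressed
  upstairs in G: the preimage of the closure of a set under the (open) quotient map
  equals the closure of the preimage.\<close>
definition is_Hg :: "('d::finite + 'm::finite) asl \<Rightarrow> ('d + 'm) asl set \<Rightarrow> bool" where
  "is_Hg g H \<longleftrightarrow> asl_subgroup H \<and> closed H \<and> connected H \<and>
     lattice_in (ASL_Z \<inter> H) H \<and> SL_image g \<subseteq> H \<and>
     closure (set_prod ASL_Z (SL_image g)) = set_prod ASL_Z H"

end

theory Submission
  imports Defs
begin

(*
  Proposition 3.6.  Write M = fst g.  The difference lattice (Z^n g)_0 is Z^n M and
  (Z^n h g)_0 = Z^n (fst h M); let V = {0} x R^m.

  An element gamma phi_g(A) of Gamma phi_g(SL(d,R)) has linear part
  G M D M^-1 with G = fst gamma integral and D = diag(A,1) fixing V pointwise, so every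
  v = k M in V is again an integral combination (k G^-1) of the rows of (G M D M^-1) M.
  Solvability of  k B = v  in integral k passes to limits of invertible matrices B
  (Cramer's rule and closedness of Z^n), and H lies in the closure of Gamma phi_g(SL(d,R)).

  For a closed connected subgroup H with Haar measure mu, a
  linear subspace P and a vector c not in P, the set of h in H with h c in P is null:
  for a counterexample W of minimal dimension, distinct translates h W meet in a null set,
  so only finitely many of them occur over a compact set, h |-> h W is locally constant,
  hence constant on the connected H, and then c itself lies in W.  Applied to the countably
  many hyperplanes orthogonal to integral vectors this gives, for almost all h, that
  k (fst h M) in V implies k M in V; for such h the first part applied to h^-1 yields the
  reverse inclusion.
*)

lemma matrix_inv_det_nz:
  fixes A :: "real^'n::finite^'n"
  assumes "det A \<noteq> 0"
  shows "A ** matrix_inv A = mat 1" "matrix_inv A ** A = mat 1"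
proof -
  have "\<exists>A'. A ** A' = mat 1 \<and> A' ** A = mat 1"
    using assms invertible_det_nz unfolding invertible_def by blast
  then have "A ** matrix_inv A = mat 1 \<and> matrix_inv A ** A = mat 1"
    unfolding matrix_inv_def by (rule someI_ex)
  then show "A ** matrix_inv A = mat 1" "matrix_inv A ** A = mat 1" by auto
qed

lemma fst_asl_mult [simp]: "fst (asl_mult a b) = fst a ** fst b"
  by (simp add: asl_mult_def)

lemma snd_asl_mult [simp]: "snd (asl_mult a b) = snd a v* fst b + snd b"
  by (simp add: asl_mult_def)

lemma fst_asl_inv [simp]: "fst (asl_inv a) = matrix_inv (fst a)"
  by (simp add: asl_inv_def)

lemma asl_mult_one_left [simp]: "asl_mult asl_one h = (h::'n::finite asl)"
  by (simp add: asl_mult_def asl_one_def)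

lemma vector_matrix_mult_uminus: "(- u) v* B = - (u v* (B::real^'n::finite^'m::finite))"
  using vector_matrix_mult_diff_distrib[of 0 u B] by simp

lemma asl_mult_inv_cancel:
  fixes x y :: "'n::finite asl"
  assumes "det (fst x) \<noteq> 0"
  shows "asl_mult x (asl_mult (asl_inv x) y) = y"
  using assms
  by (simp add: asl_mult_def asl_inv_def prod_eq_iff matrix_mul_assoc matrix_inv_det_nz
      vector_matrix_mult_uminus vector_matrix_mul_assoc)

lemma asl_inv_mult_cancel:
  fixes x y :: "'n::finite asl"
  assumes "det (fst x) \<noteq> 0"
  shows "asl_mult (asl_inv x) (asl_mult x y) = y"
proof -
  have "matrix_inv (fst x) ** (fst x ** fst y) = fst y"
    by (simp add: matrix_mul_assoc matrix_inv_det_nz assms)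
  then show ?thesis
    by (simp add: asl_mult_def asl_inv_def prod_eq_iff vector_matrix_mult_uminus
        vector_matrix_mul_assoc)
qed

lemma asl_subgroupD:
  assumes "asl_subgroup H"
  shows "asl_one \<in> H" "\<And>a b. a \<in> H \<Longrightarrow> b \<in> H \<Longrightarrow> asl_mult a b \<in> H"
    "\<And>a. a \<in> H \<Longrightarrow> asl_inv a \<in> H" "\<And>a. a \<in> H \<Longrightarrow> det (fst a) = 1"
  using assms unfolding asl_subgroup_def ASL_R_def by auto

lemma asl_one_ASL_Z: "asl_one \<in> ASL_Z"
  by (auto simp: ASL_Z_def ASL_R_def asl_one_def mat_def simp del: det_I) (metis det_I mat_def)

lemma diff_set_lattice_orbit:
  "diff_set (lattice_orbit g) = (\<lambda>k. k v* fst g) ` int_vecs"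
proof (intro equalityI subsetI)
  fix y assume "y \<in> diff_set (lattice_orbit g)"
  then obtain a b where "a \<in> int_vecs" "b \<in> int_vecs" "y = asl_act a g - asl_act b g"
    unfolding diff_set_def lattice_orbit_def by auto
  then show "y \<in> (\<lambda>k. k v* fst g) ` int_vecs"
    by (auto simp: asl_act_def int_vecs_def vector_matrix_mult_diff_distrib
        intro!: image_eqI[of _ _ "a - b"])
next
  fix y assume "y \<in> (\<lambda>k. k v* fst g) ` int_vecs"
  then obtain k where k: "k \<in> int_vecs" "y = k v* fst g" by auto
  then have "y = asl_act k g - asl_act 0 g" by (simp add: asl_act_def)
  moreover have "0 \<in> int_vecs" by (simp add: int_vecs_def)
  ultimately show "y \<in> diff_set (lattice_orbit g)"
    unfolding diff_set_def lattice_orbit_def using k by blast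
qed

text \<open>Integral matrices of determinant one have integral inverses (Cramer's rule).\<close>

lemma Ints_det:
  fixes A :: "real^'n::finite^'n"
  assumes "\<And>i j. A $ i $ j \<in> \<int>"
  shows "det A \<in> \<int>"
  unfolding det_def by (intro Ints_sum Ints_mult Ints_prod assms Ints_of_int)

lemma matrix_inv_Ints:
  fixes A :: "real^'n::finite^'n"
  assumes "\<And>i j. A $ i $ j \<in> \<int>" "det A = 1"
  shows "matrix_inv A $ i $ j \<in> \<int>"
proof -
  let ?x = "matrix_inv A *v axis j 1"
  have "A *v ?x = axis j 1"
    by (simp add: matrix_vector_mul_assoc matrix_inv_det_nz assms)
  then have "?x $ i = det (\<chi> a l. if l = i then (axis j 1::real^'n) $ a else A $ a $ l)"
    using cramer[of A ?x "axis j 1"] assms by simp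
  also have "\<dots> \<in> \<int>"
    by (rule Ints_det) (simp add: axis_def assms)
  finally show ?thesis
    by (simp add: matrix_vector_mult_basis column_def)
qed

lemma closed_int_vecs: "closed (int_vecs :: (real^'n::finite) set)"
proof -
  have "int_vecs = (\<Inter>i. {k::real^'n. k $ i \<in> \<int>})" by (auto simp: int_vecs_def)
  moreover have "closed {k::real^'n. k $ i \<in> \<int>}" for i
    by (intro closed_vimage[of "\<int>" "\<lambda>k. k $ i", unfolded vimage_def] closed_Ints continuous_intros)
  ultimately show ?thesis by (metis closed_INT)
qed

lemma countable_int_vecs: "countable (int_vecs :: (real^'n::finite) set)"
  unfolding int_vecs_def by (rule countable_vector) (simp add: Ints_def)

text \<open>Integral solvability of  k B = v  is preserved under limits of invertible matrices:
  the solutions are given by Cramer's rule, which is continuous, and Z^n is closed.\<close>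

lemma tendsto_det [tendsto_intros]:
  fixes f :: "'a \<Rightarrow> real^'n::finite^'n"
  assumes "(f \<longlongrightarrow> A) F"
  shows "((\<lambda>x. det (f x)) \<longlongrightarrow> det A) F"
  unfolding det_def by (intro tendsto_intros assms)

lemma integral_solutions_closed:
  fixes A :: "nat \<Rightarrow> real^'n::finite^'n"
  assumes lim: "A \<longlonglongrightarrow> B" and dB: "det B \<noteq> 0"
    and sol: "\<And>n. \<exists>k\<in>int_vecs. k v* A n = v"
  shows "\<exists>k\<in>int_vecs. k v* B = v"
proof -
  define cr where
    "cr C = (\<chi> j. det (\<chi> i l. if l = j then v $ i else transpose C $ i $ l) / det (transpose C))"
    for C :: "real^'n^'n"
  have cramer_sol: "k v* C = v \<longleftrightarrow> k = cr C" if "det C \<noteq> 0" for k C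
    using cramer[of "transpose C" k v] that by (simp add: cr_def det_transpose)
  have entries: "(\<lambda>n. transpose (A n) $ i $ l) \<longlonglongrightarrow> transpose B $ i $ l" for l i
    unfolding transpose_def by (simp add: tendsto_vec_nth lim)
  have transp: "(\<lambda>n. transpose (A n)) \<longlonglongrightarrow> transpose B"
    unfolding transpose_def by (intro tendsto_intros lim)
  have cr_lim: "(\<lambda>n. cr (A n)) \<longlonglongrightarrow> cr B"
    unfolding cr_def using dB
    by (intro tendsto_vec_lambda tendsto_divide tendsto_det transp) (auto intro: entries simp: det_transpose)
  have cr_int: "eventually (\<lambda>n. cr (A n) \<in> int_vecs) sequentially"
  proof -
    have "eventually (\<lambda>n. det (A n) \<noteq> 0) sequentially"
      using tendsto_imp_eventually_ne[OF tendsto_det[OF lim] dB] .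
    then show ?thesis
    proof (rule eventually_mono)
      fix n assume "det (A n) \<noteq> 0"
      moreover obtain k where "k \<in> int_vecs" "k v* A n = v" using sol by blast
      ultimately show "cr (A n) \<in> int_vecs" using cramer_sol[of "A n" k] by simp
    qed
  qed
  have "cr B \<in> int_vecs"
    by (rule Lim_in_closed_set[OF closed_int_vecs cr_int trivial_limit_sequentially cr_lim])
  then show ?thesis using cramer_sol[OF dB] by blast
qed

text \<open>Elements of Gamma phi_g(SL(d,R)) keep every vector of Z^n (fst g) in V = {0} x R^m
  inside the lattice they generate, because diag(A, 1_m) fixes V.\<close>

lemma embed_block_fixes_zero_first:
  fixes v :: "real^('d::finite + 'm::finite)"
  assumes "v \<in> zero_first"
  shows "v v* fst (embed_block A x :: ('d+'m) asl) = v"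
proof -
  have v0: "\<And>a. v $ Inl a = 0" using assms by (simp add: zero_first_def)
  have "\<And>i j. v $ i * fst (embed_block A x :: ('d+'m) asl) $ i $ j = (if i = j then v $ j else 0)"
    by (auto simp: embed_block_def v0 split: sum.splits)
  then show ?thesis
    by (simp add: vector_matrix_mult_def vec_eq_iff)
qed

lemma SL_orbit_integral_solution:
  fixes g :: "('d::finite + 'm::finite) asl"
  assumes "det (fst g) = 1" "x \<in> set_prod ASL_Z (SL_image g)" "k \<in> int_vecs"
    "k v* fst g \<in> zero_first"
  shows "\<exists>k'\<in>int_vecs. k' v* (fst x ** fst g) = k v* fst g"
proof -
  obtain \<gamma> A where x: "x = asl_mult \<gamma> (phi g A 0)" and \<gamma>: "\<gamma> \<in> ASL_Z"
    using assms(2) unfolding set_prod_def SL_image_def by auto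
  let ?M = "fst g" and ?D = "fst (embed_block A 0 :: ('d+'m) asl)" and ?G = "fst \<gamma>"
  have G: "\<And>i j. ?G $ i $ j \<in> \<int>" "det ?G = 1" using \<gamma> unfolding ASL_Z_def ASL_R_def by auto
  have "fst x ** ?M = ?G ** (((?M ** ?D) ** matrix_inv ?M) ** ?M)"
    by (simp add: x phi_def matrix_mul_assoc)
  also have "\<dots> = ?G ** (?M ** ?D)"
    by (simp add: matrix_mul_assoc[symmetric] matrix_inv_det_nz assms(1))
  finally have x_M: "fst x ** ?M = ?G ** (?M ** ?D)" .
  let ?k = "k v* matrix_inv ?G"
  have "?k \<in> int_vecs"
    using assms(3) matrix_inv_Ints[OF G] unfolding int_vecs_def
    by (auto simp: vector_matrix_mult_def intro!: Ints_sum Ints_mult)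
  moreover have "?k v* (fst x ** ?M) = (k v* ?M) v* ?D"
  proof -
    have "?k v* (fst x ** ?M) = (k v* (matrix_inv ?G ** ?G)) v* (?M ** ?D)"
      by (simp add: x_M vector_matrix_mul_assoc matrix_mul_assoc)
    then show ?thesis by (simp add: matrix_inv_det_nz G vector_matrix_mul_assoc)
  qed
  ultimately show ?thesis
    using embed_block_fixes_zero_first[OF assms(4)] by auto
qed

lemma closure_SL_orbit_integral_solution:
  fixes g :: "('d::finite + 'm::finite) asl"
  assumes g: "det (fst g) = 1" and h: "h \<in> closure (set_prod ASL_Z (SL_image g))"
    and dh: "det (fst h) \<noteq> 0" and k: "k \<in> int_vecs" "k v* fst g \<in> zero_first"
  shows "\<exists>k'\<in>int_vecs. k' v* (fst h ** fst g) = k v* fst g"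
proof -
  obtain x where x: "\<And>n. x n \<in> set_prod ASL_Z (SL_image g)" and lim: "x \<longlonglongrightarrow> h"
    using h unfolding closure_sequential by blast
  have "(\<lambda>n. fst (x n) ** fst g) \<longlonglongrightarrow> fst h ** fst g"
    unfolding matrix_matrix_mult_def by (intro tendsto_intros lim)
  moreover have "det (fst h ** fst g) \<noteq> 0" using g dh by (simp add: det_mul)
  ultimately show ?thesis
    by (rule integral_solutions_closed) (use SL_orbit_integral_solution[OF g x k] in blast)
qed

text \<open>H lies in the closure of Gamma phi_g(SL(d,R)), because H \<subseteq> Gamma H.\<close>

lemma Hg_subset_closure:
  assumes "is_Hg g H"
  shows "H \<subseteq> closure (set_prod ASL_Z (SL_image g))"
proof
  fix h assume "h \<in> H"
  then have "asl_mult asl_one h \<in> set_prod ASL_Z H"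
    unfolding set_prod_def using asl_one_ASL_Z by blast
  then show "h \<in> closure (set_prod ASL_Z (SL_image g))"
    using assms by (simp add: is_Hg_def)
qed

lemma lattice_zero_first_mono:
  fixes g :: "('d::finite + 'm::finite) asl"
  assumes g: "g \<in> ASL_R" and Hg: "is_Hg g H" and h: "h \<in> H"
  shows "diff_set (lattice_orbit g) \<inter> zero_first
           \<subseteq> diff_set (lattice_orbit (asl_mult h g)) \<inter> zero_first"
proof
  fix y assume "y \<in> diff_set (lattice_orbit g) \<inter> zero_first"
  then obtain k where k: "k \<in> int_vecs" "y = k v* fst g" "y \<in> zero_first"
    unfolding diff_set_lattice_orbit by blast
  have "det (fst h) = 1" using Hg h asl_subgroupD(4) unfolding is_Hg_def by blast
  then obtain k' where "k' \<in> int_vecs" "k' v* (fst h ** fst g) = y"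
    using closure_SL_orbit_integral_solution[of g h k] g Hg_subset_closure[OF Hg] h k
    by (auto simp: ASL_R_def)
  then show "y \<in> diff_set (lattice_orbit (asl_mult h g)) \<inter> zero_first"
    unfolding diff_set_lattice_orbit using k(3) by auto
qed

definition landing :: "'n::finite asl set \<Rightarrow> real^'n \<Rightarrow> (real^'n) set \<Rightarrow> 'n asl set" where
  "landing H c W = {h \<in> H. fst h *v c \<in> W}"

definition moved :: "'n::finite asl \<Rightarrow> (real^'n) set \<Rightarrow> (real^'n) set" where
  "moved x W = (\<lambda>w. fst x *v w) ` W"

lemma moved_mult: "moved x (moved y W) = moved (asl_mult x y) W"
  by (auto simp: moved_def image_image matrix_vector_mul_assoc)

lemma moved_one: "moved asl_one W = W"
  by (simp add: moved_def asl_one_def)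

lemma subspace_moved: "subspace W \<Longrightarrow> subspace (moved x W)"
  unfolding moved_def by (rule linear_subspace_image[OF matrix_vector_mul_linear])

lemma dim_moved:
  assumes "det (fst x) \<noteq> 0"
  shows "dim (moved x W) = dim W"
proof -
  have "inj ((*v) (fst x))"
    using assms inj_matrix_vector_mult invertible_det_nz by blast
  then show ?thesis
    unfolding moved_def by (intro dim_image_eq[OF matrix_vector_mul_linear]) (auto simp: inj_on_def)
qed

lemma landing_Int: "landing H c W \<inter> landing H c W' = landing H c (W \<inter> W')"
  by (auto simp: landing_def)

lemma landing_translate:
  assumes sg: "asl_subgroup H" and x: "x \<in> H"
  shows "(\<lambda>h. asl_mult x h) ` landing H c W = landing H c (moved x W)"
proof (intro equalityI subsetI)
  fix y assume "y \<in> (\<lambda>h. asl_mult x h) ` landing H c W"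
  then obtain h where h: "h \<in> H" "fst h *v c \<in> W" "y = asl_mult x h" by (auto simp: landing_def)
  then have "fst y *v c = fst x *v (fst h *v c)" by (simp add: matrix_vector_mul_assoc)
  then show "y \<in> landing H c (moved x W)"
    using h asl_subgroupD(2)[OF sg x] by (auto simp: landing_def moved_def)
next
  fix y assume "y \<in> landing H c (moved x W)"
  then obtain w where y: "y \<in> H" "w \<in> W" "fst y *v c = fst x *v w"
    by (auto simp: landing_def moved_def)
  have dx: "det (fst x) \<noteq> 0" using asl_subgroupD(4)[OF sg x] by simp
  let ?h = "asl_mult (asl_inv x) y"
  have "?h \<in> H" using asl_subgroupD[OF sg] x y by blast
  moreover have "fst ?h *v c = w"
    by (simp add: matrix_vector_mul_assoc[symmetric] y(3) matrix_vector_mul_assoc matrix_inv_det_nz dx)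
  ultimately have "?h \<in> landing H c W" using y by (simp add: landing_def)
  moreover have "asl_mult x ?h = y" by (rule asl_mult_inv_cancel[OF dx])
  ultimately show "y \<in> (\<lambda>h. asl_mult x h) ` landing H c W" by force
qed

lemma closed_moves_into:
  fixes c :: "real^'n::finite"
  assumes "closed W"
  shows "closed {h :: 'n asl. fst h *v c \<in> W}"
proof -
  have "continuous_on UNIV (\<lambda>h :: 'n asl. fst h *v c)"
    unfolding matrix_vector_mult_def by (intro continuous_intros)
  then show ?thesis
    using closed_vimage[OF assms] by (simp add: vimage_def)
qed

lemma continuous_asl_mult:
  "continuous_on UNIV (\<lambda>p :: 'n::finite asl \<times> 'n asl. asl_mult (fst p) (snd p))"
  unfolding asl_mult_def matrix_matrix_mult_def vector_matrix_mult_def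
  by (intro continuous_intros)

lemma space_haar: "haar_measure H \<mu> \<Longrightarrow> space \<mu> = H"
  unfolding haar_measure_def
  by (metis sets_eq_imp_space_eq space_borel space_restrict_space Int_UNIV_right)

lemma sets_haar_closed:
  assumes "haar_measure H \<mu>" "closed S"
  shows "H \<inter> S \<in> sets \<mu>"
  using assms unfolding haar_measure_def sets_restrict_space by (auto intro: borel_closed)

lemma landing_sets:
  assumes "haar_measure H \<mu>" "closed W"
  shows "landing H c W \<in> sets \<mu>"
proof -
  have "landing H c W = H \<inter> {h. fst h *v c \<in> W}" by (auto simp: landing_def)
  then show ?thesis
    using sets_haar_closed[OF assms(1) closed_moves_into[OF assms(2)]] by simp
qed

lemma haar_ball_fmeasurable:
  assumes hm: "haar_measure H \<mu>" and cl: "closed H"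
  shows "H \<inter> cball x r \<in> fmeasurable \<mu>"
proof (rule fmeasurableI)
  show "H \<inter> cball x r \<in> sets \<mu>" by (rule sets_haar_closed[OF hm closed_cball])
  have "compact (H \<inter> cball x r)" using closed_Int_compact[OF cl compact_cball] .
  then show "emeasure \<mu> (H \<inter> cball x r) < \<infinity>" using hm unfolding haar_measure_def by blast
qed

lemma haar_positive_bounded_part:
  assumes hm: "haar_measure H \<mu>" and S: "S \<in> sets \<mu>" "emeasure \<mu> S \<noteq> 0"
  shows "\<exists>R::nat. emeasure \<mu> (S \<inter> cball 0 (real R)) \<noteq> 0"
proof (rule ccontr)
  assume "\<not> ?thesis"
  then have null: "\<And>R::nat. emeasure \<mu> (S \<inter> cball 0 (real R)) = 0" by blast
  have "S = (\<Union>R::nat. S \<inter> cball 0 (real R))"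
    by (auto simp: real_arch_simple)
  moreover have "range (\<lambda>R::nat. S \<inter> cball 0 (real R)) \<subseteq> sets \<mu>"
  proof -
    have "S \<inter> cball 0 (real R) = S \<inter> (H \<inter> cball 0 (real R))" for R
      using sets.sets_into_space[OF S(1)] space_haar[OF hm] by blast
    moreover have "H \<inter> cball 0 (real R) \<in> sets \<mu>" for R
      by (rule sets_haar_closed[OF hm closed_cball])
    ultimately show ?thesis using sets.Int[OF S(1)] by (metis image_subset_iff)
  qed
  ultimately have "emeasure \<mu> S = 0"
    using emeasure_UN_eq_0[of \<mu> "\<lambda>R::nat. S \<inter> cball 0 (real R)"] null by simp
  then show False using S(2) by simp
qed

lemma haar_positive_compact_part:
  assumes hm: "haar_measure H \<mu>" and cl: "closed H" and S: "S \<in> sets \<mu>" "emeasure \<mu> S \<noteq> 0"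
  shows "\<exists>B. compact B \<and> B \<subseteq> H \<and> S \<inter> B \<in> fmeasurable \<mu> \<and> measure \<mu> (S \<inter> B) > 0"
proof -
  obtain R :: nat where pos: "emeasure \<mu> (S \<inter> cball 0 (real R)) \<noteq> 0"
    using haar_positive_bounded_part[OF hm S] by blast
  define B where "B = H \<inter> cball 0 (real R)"
  have SB: "S \<inter> B = S \<inter> cball 0 (real R)"
    using sets.sets_into_space[OF S(1)] space_haar[OF hm] by (auto simp: B_def)
  have Bf: "B \<in> fmeasurable \<mu>" unfolding B_def by (rule haar_ball_fmeasurable[OF hm cl])
  have fm: "S \<inter> B \<in> fmeasurable \<mu>"
    by (rule fmeasurableI2[OF Bf Int_lower2 sets.Int[OF S(1) fmeasurableD[OF Bf]]])
  moreover have "measure \<mu> (S \<inter> B) > 0"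
  proof -
    have "emeasure \<mu> (S \<inter> B) \<noteq> 0" using pos SB by simp
    then show ?thesis using emeasure_eq_measure2[OF fm] by (auto simp: order_less_le)
  qed
  moreover have "compact B" unfolding B_def by (rule closed_Int_compact[OF cl compact_cball])
  ultimately show ?thesis unfolding B_def by blast
qed

lemma finite_almost_disjoint_family:
  assumes C: "C \<in> fmeasurable M" and e: "e > 0"
    and S: "\<And>i. i \<in> I \<Longrightarrow> S i \<in> sets M \<and> S i \<subseteq> C \<and> e \<le> measure M (S i)"
    and disj: "\<And>i j. i \<in> I \<Longrightarrow> j \<in> I \<Longrightarrow> i \<noteq> j \<Longrightarrow> S i \<inter> S j \<in> null_sets M"
  shows "finite I"
proof (rule ccontr)
  assume "infinite I"
  obtain N :: nat where N: "measure M C < real N * e"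
    using ex_less_of_nat_mult[OF e] by blast
  obtain J where J: "finite J" "card J = N" "J \<subseteq> I"
    using infinite_arbitrarily_large[OF \<open>infinite I\<close>] by blast
  have "real N * e \<le> (\<Sum>i\<in>J. measure M (S i))"
    using sum_bounded_below[of J e "\<lambda>i. measure M (S i)"] S J by auto
  also have "\<dots> = measure M (\<Union>i\<in>J. S i)"
  proof (rule measure_UNION_AE[OF J(1), symmetric])
    show "S i \<in> fmeasurable M" if "i \<in> J" for i
      using fmeasurableI2[OF C] S J(3) that by blast
    show "pairwise (\<lambda>i j. AE x in M. x \<notin> S i \<or> x \<notin> S j) J"
      using AE_not_in[OF disj] J(3) by (auto simp: pairwise_def)
  qed
  also have "\<dots> \<le> measure M C"
    by (rule measure_mono_fmeasurable[OF _ _ C]) (use S J(1,3) in auto)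
  finally show False using N by simp
qed

text \<open>Left translation preserves Haar measure; for a set of positive measure this also
  forces the translate to be measurable.\<close>

lemma haar_translate_measure:
  assumes hm: "haar_measure H \<mu>" and x: "x \<in> H" and A: "A \<in> sets \<mu>" "emeasure \<mu> A \<noteq> 0"
  shows "(\<lambda>h. asl_mult x h) ` A \<in> sets \<mu>" "measure \<mu> ((\<lambda>h. asl_mult x h) ` A) = measure \<mu> A"
proof -
  have "emeasure \<mu> ((\<lambda>h. asl_mult x h) ` A) = emeasure \<mu> A"
    using hm x A(1) unfolding haar_measure_def by blast
  then show "(\<lambda>h. asl_mult x h) ` A \<in> sets \<mu>" "measure \<mu> ((\<lambda>h. asl_mult x h) ` A) = measure \<mu> A"
    using emeasure_neq_0_sets[of \<mu> "(\<lambda>h. asl_mult x h) ` A"] A(2) by (auto simp: measure_def)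
qed

text \<open>Translates of a compact B \<subseteq> H by elements of a compact K \<subseteq> H all lie in one set of
  finite Haar measure, since K B is compact.\<close>

lemma haar_compact_translates_bounded:
  assumes sg: "asl_subgroup H" and hm: "haar_measure H \<mu>" and cl: "closed H"
    and K: "compact K" "K \<subseteq> H" and B: "compact B" "B \<subseteq> H"
  shows "\<exists>C\<in>fmeasurable \<mu>. \<forall>x\<in>K. (\<lambda>h. asl_mult x h) ` B \<subseteq> C"
proof -
  have "compact ((\<lambda>p. asl_mult (fst p) (snd p)) ` (K \<times> B))"
    by (intro compact_continuous_image continuous_on_subset[OF continuous_asl_mult]
        compact_Times K(1) B(1)) simp
  then obtain z r where bound: "(\<lambda>p. asl_mult (fst p) (snd p)) ` (K \<times> B) \<subseteq> cball z r"
    using compact_imp_bounded bounded_subset_cball by blast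
  have "asl_mult x b \<in> H \<inter> cball z r" if "x \<in> K" "b \<in> B" for x b
  proof
    have "(x, b) \<in> K \<times> B" using that by simp
    then show "asl_mult x b \<in> cball z r" using bound by force
    show "asl_mult x b \<in> H" using that K(2) B(2) asl_subgroupD(2)[OF sg] by blast
  qed
  then show ?thesis using haar_ball_fmeasurable[OF hm cl] by (metis image_subsetI)
qed

text \<open>If every distinct pair of translates x W, y W lands in a null set while W itself lands
  with positive measure, then only finitely many translates occur over a compact subset of H:
  translates of a fixed bounded piece of the landing set are almost disjoint and stay in a
  bounded set.\<close>

lemma finite_moved_over_compact:
  assumes sg: "asl_subgroup H" and hm: "haar_measure H \<mu>" and cl: "closed H"
    and sW: "subspace W" and pW: "emeasure \<mu> (landing H c W) \<noteq> 0"
    and disj: "\<And>x y. x \<in> H \<Longrightarrow> y \<in> H \<Longrightarrow> moved x W \<noteq> moved y W \<Longrightarrow>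
        landing H c (moved x W) \<inter> landing H c (moved y W) \<in> null_sets \<mu>"
    and K: "compact K" "K \<subseteq> H"
  shows "finite ((\<lambda>x. moved x W) ` K)"
proof -
  obtain B where B: "compact B" "B \<subseteq> H" and A: "landing H c W \<inter> B \<in> fmeasurable \<mu>"
    and mA: "measure \<mu> (landing H c W \<inter> B) > 0"
    using haar_positive_compact_part[OF hm cl landing_sets[OF hm closed_subspace[OF sW]] pW] by blast
  define A where "A = landing H c W \<inter> B"
  obtain C where C: "C \<in> fmeasurable \<mu>" and KB_C: "\<And>x. x \<in> K \<Longrightarrow> (\<lambda>h. asl_mult x h) ` B \<subseteq> C"
    using haar_compact_translates_bounded[OF sg hm cl K B] by blast
  define sel where "sel U = inv_into K (\<lambda>x. moved x W) U" for U
  define T where "T U = (\<lambda>h. asl_mult (sel U) h) ` A" for U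
  have T: "T U \<in> sets \<mu> \<and> T U \<subseteq> C \<and> measure \<mu> A \<le> measure \<mu> (T U) \<and> T U \<subseteq> landing H c U"
    if U: "U \<in> (\<lambda>x. moved x W) ` K" for U
  proof -
    have sel: "sel U \<in> K" "moved (sel U) W = U"
      using inv_into_into[OF U] f_inv_into_f[OF U] unfolding sel_def by auto
    then have selH: "sel U \<in> H" using K(2) by blast
    have "emeasure \<mu> A \<noteq> 0" using mA by (auto simp: measure_def A_def)
    then have "T U \<in> sets \<mu>" "measure \<mu> (T U) = measure \<mu> A"
      using haar_translate_measure[OF hm selH] A unfolding T_def A_def by auto
    moreover have "T U \<subseteq> C" using KB_C[OF sel(1)] unfolding T_def A_def by blast
    moreover have "T U \<subseteq> landing H c U"
      using landing_translate[OF sg selH, of c W] sel(2) unfolding T_def A_def by auto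
    ultimately show ?thesis by simp
  qed
  show ?thesis
  proof (rule finite_almost_disjoint_family[OF C, where S = T])
    show "measure \<mu> A > 0" using mA by (simp add: A_def)
    show "T U \<in> sets \<mu> \<and> T U \<subseteq> C \<and> measure \<mu> A \<le> measure \<mu> (T U)"
      if "U \<in> (\<lambda>x. moved x W) ` K" for U
      using T[OF that] by blast
    fix U U' assume U: "U \<in> (\<lambda>x. moved x W) ` K" and U': "U' \<in> (\<lambda>x. moved x W) ` K"
      and "U \<noteq> U'"
    then have "landing H c U \<inter> landing H c U' \<in> null_sets \<mu>"
      using disj K(2) by blast
    then show "T U \<inter> T U' \<in> null_sets \<mu>"
      by (rule null_sets_subset) (use T[OF U] T[OF U'] in blast)+
  qed
qed

text \<open>If W is a subspace avoiding c of minimal dimension among those whose landing set is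
  not null, then distinct translates x W, y W have a null common landing set: it is the
  x-translate of the landing set of the smaller subspace W \<inter> x^-1 y W.\<close>

lemma landing_moved_Int_null:
  assumes sg: "asl_subgroup H" and hm: "haar_measure H \<mu>"
    and sW: "subspace W" and cW: "c \<notin> W"
    and minW: "\<And>W'. subspace W' \<Longrightarrow> c \<notin> W' \<Longrightarrow> dim W' < dim W \<Longrightarrow> landing H c W' \<in> null_sets \<mu>"
    and x: "x \<in> H" and y: "y \<in> H" and ne: "moved x W \<noteq> moved y W"
  shows "landing H c (moved x W) \<inter> landing H c (moved y W) \<in> null_sets \<mu>"
proof -
  let ?z = "asl_mult (asl_inv x) y"
  let ?I = "W \<inter> moved ?z W"
  have dx: "det (fst x) \<noteq> 0" using asl_subgroupD(4)[OF sg x] by simp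
  have zH: "?z \<in> H" using asl_subgroupD[OF sg] x y by blast
  have x_z: "moved x (moved ?z W) = moved y W"
    by (simp add: moved_mult asl_mult_inv_cancel[OF dx])
  have sZ: "subspace (moved ?z W)" by (rule subspace_moved[OF sW])
  have sI: "subspace ?I" using sW sZ by (rule subspace_inter)
  have "dim ?I < dim W"
  proof (rule ccontr)
    assume "\<not> dim ?I < dim W"
    then have "?I = W" using subspace_dim_equal[OF sI sW] by (simp add: not_less)
    then have "W \<subseteq> moved ?z W" by blast
    moreover have "dim (moved ?z W) = dim W"
      using dim_moved[of ?z W] asl_subgroupD(4)[OF sg zH] by simp
    ultimately have "W = moved ?z W" using subspace_dim_equal[OF sW sZ] by simp
    then show False using ne x_z by simp
  qed
  then have null: "landing H c ?I \<in> null_sets \<mu>" using minW sI cW by blast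
  have inj: "inj (\<lambda>h. asl_mult x h)"
    by (rule inj_on_inverseI[of _ "\<lambda>h. asl_mult (asl_inv x) h"]) (rule asl_inv_mult_cancel[OF dx])
  have "landing H c (moved x W) \<inter> landing H c (moved y W)
      = (\<lambda>h. asl_mult x h) ` landing H c W \<inter> (\<lambda>h. asl_mult x h) ` landing H c (moved ?z W)"
    by (simp only: landing_translate[OF sg x] x_z)
  also have "\<dots> = (\<lambda>h. asl_mult x h) ` landing H c ?I"
    by (simp only: image_Int[OF inj, symmetric] landing_Int)
  moreover have "emeasure \<mu> ((\<lambda>h. asl_mult x h) ` landing H c ?I) = 0"
    using hm x null unfolding haar_measure_def null_sets_def by auto
  moreover have "landing H c (moved x W) \<inter> landing H c (moved y W) \<in> sets \<mu>"
    using landing_sets[OF hm closed_subspace[OF subspace_moved[OF sW]]] by blast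
  ultimately show ?thesis by (simp add: null_sets_def)
qed

text \<open>If only finitely many translates of W occur near x0, the map x |-> x W is constant near
  x0: the elements moving W into a subspace U form a closed set, and a subspace of the same
  dimension containing x0 W equals it.\<close>

lemma moved_locally_constant:
  fixes H :: "'n::finite asl set"
  assumes sg: "asl_subgroup H" and sW: "subspace W"
    and fin: "finite ((\<lambda>x. moved x W) ` (H \<inter> cball x0 1))" and x0: "x0 \<in> H"
  shows "\<exists>T. openin (top_of_set H) T \<and> x0 \<in> T \<and> (\<forall>x\<in>T. moved x W = moved x0 W)"
proof -
  let ?V = "(\<lambda>x. moved x W) ` (H \<inter> cball x0 1)"
  define F where "F U = {x. moved x W \<subseteq> U}" for U
  have closed_F: "closed (F U)" if "U \<in> ?V" for U
  proof -
    have "closed U" using that closed_subspace subspace_moved[OF sW] by blast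
    then have "closed (\<Inter>w\<in>W. {x :: 'n asl. fst x *v w \<in> U})"
      by (intro closed_INT) (simp add: closed_moves_into)
    moreover have "F U = (\<Inter>w\<in>W. {x. fst x *v w \<in> U})" by (auto simp: F_def moved_def)
    ultimately show ?thesis by simp
  qed
  define G where "G = (\<Union>U\<in>?V - {moved x0 W}. F U)"
  have "closed G" unfolding G_def using fin closed_F by (intro closed_UN) auto
  have x0_G: "x0 \<notin> G"
  proof
    assume "x0 \<in> G"
    then obtain x where x: "x \<in> H" and ne: "moved x W \<noteq> moved x0 W" and sub: "moved x0 W \<subseteq> moved x W"
      unfolding G_def F_def by blast
    have "dim (moved x W) \<le> dim (moved x0 W)"
      using dim_moved[of x W] dim_moved[of x0 W] asl_subgroupD(4)[OF sg x] asl_subgroupD(4)[OF sg x0]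
      by simp
    then show False
      using subspace_dim_equal[OF subspace_moved[OF sW] subspace_moved[OF sW] sub] ne by simp
  qed
  let ?T = "H \<inter> (ball x0 1 - G)"
  have "openin (top_of_set H) ?T" using \<open>closed G\<close> by (intro openin_open_Int open_Diff) auto
  moreover have "x0 \<in> ?T" using x0 x0_G by simp
  moreover have "moved x W = moved x0 W" if "x \<in> ?T" for x
  proof (rule ccontr)
    assume "moved x W \<noteq> moved x0 W"
    moreover have "moved x W \<in> ?V" using that by auto
    ultimately have "x \<in> G" unfolding G_def F_def by blast
    then show False using that by blast
  qed
  ultimately show ?thesis by blast
qed

lemma null_landing:
  fixes H :: "'n::finite asl set"
  assumes sg: "asl_subgroup H" and cl: "closed H" and cn: "connected H"
    and hm: "haar_measure H \<mu>" and sP: "subspace P" and cP: "c \<notin> P"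
  shows "landing H c P \<in> null_sets \<mu>"
proof (rule ccontr)
  assume "landing H c P \<notin> null_sets \<mu>"
  then have pos: "emeasure \<mu> (landing H c P) \<noteq> 0"
    using landing_sets[OF hm closed_subspace[OF sP]] by blast
  let ?bad = "\<lambda>W. subspace W \<and> c \<notin> W \<and> emeasure \<mu> (landing H c W) \<noteq> 0"
  obtain W where W: "?bad W" and minW: "\<And>W'. ?bad W' \<Longrightarrow> dim W \<le> dim W'"
    using ex_has_least_nat[of ?bad P dim] sP cP pos by blast
  have sW: "subspace W" and cW: "c \<notin> W" and pW: "emeasure \<mu> (landing H c W) \<noteq> 0"
    using W by auto
  have small_null: "landing H c W' \<in> null_sets \<mu>"
    if "subspace W'" "c \<notin> W'" "dim W' < dim W" for W'
    using minW[of W'] that landing_sets[OF hm closed_subspace[OF that(1)]] by force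
  have "(\<lambda>x. moved x W) constant_on H"
  proof (rule locally_constant_imp_constant[OF cn])
    fix x0 assume x0: "x0 \<in> H"
    have "finite ((\<lambda>x. moved x W) ` (H \<inter> cball x0 1))"
      by (rule finite_moved_over_compact[OF sg hm cl sW pW
            landing_moved_Int_null[OF sg hm sW cW small_null]])
        (auto intro: closed_Int_compact[OF cl])
    then show "\<exists>T. openin (top_of_set H) T \<and> x0 \<in> T \<and> (\<forall>x\<in>T. moved x W = moved x0 W)"
      by (rule moved_locally_constant[OF sg sW _ x0])
  qed
  then have invariant: "moved x W = W" if "x \<in> H" for x
    using that asl_subgroupD(1)[OF sg] moved_one unfolding constant_on_def by metis
  obtain h where "h \<in> landing H c W"
    using pW by (metis emeasure_empty equals0I)
  then have h: "h \<in> H" "fst h *v c \<in> W" by (auto simp: landing_def)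
  have dh: "det (fst h) \<noteq> 0" using asl_subgroupD(4)[OF sg h(1)] by simp
  have "matrix_inv (fst h) *v (fst h *v c) \<in> moved (asl_inv h) W"
    using h(2) by (auto simp: moved_def)
  then have "c \<in> W"
    using invariant[OF asl_subgroupD(3)[OF sg h(1)]]
    by (simp add: matrix_vector_mul_assoc matrix_inv_det_nz[OF dh])
  then show False using cW by simp
qed

lemma vector_matrix_mult_component:
  fixes k :: "real^'m::finite" and B :: "real^'n::finite^'m"
  shows "(k v* B) $ j = inner k (B *v axis j 1)"
  by (simp add: cart_eq_inner_axis dot_lmul_matrix)

lemma vector_matrix_cancel:
  fixes B :: "real^'n::finite^'n"
  assumes "det B \<noteq> 0"
  shows "u v* B = w v* B \<longleftrightarrow> u = w"
  by (metis assms matrix_inv_det_nz(1) vector_matrix_mul_assoc vector_matrix_mul_rid)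

text \<open>For almost every h in H, every integral k with k (fst h M) in V = {0} x R^m already has
  k M in V: otherwise some coordinate <k, M e_a> of k M is nonzero, and h must move
  c = M e_a into the hyperplane orthogonal to k.\<close>

lemma AE_zero_first_reflected:
  fixes H :: "('d::finite + 'm::finite) asl set" and M :: "real^('d+'m)^('d+'m)"
  assumes sg: "asl_subgroup H" and cl: "closed H" and cn: "connected H"
    and hm: "haar_measure H \<mu>"
  shows "AE h in \<mu>. \<forall>k\<in>int_vecs. k v* (fst h ** M) \<in> zero_first \<longrightarrow> k v* M \<in> zero_first"
proof -
  have "AE h in \<mu>. k v* (fst h ** M) \<in> zero_first \<longrightarrow> k v* M \<in> zero_first" for k
  proof (cases "k v* M \<in> zero_first")
    case False
    then obtain a where a: "(k v* M) $ Inl a \<noteq> 0" by (auto simp: zero_first_def)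
    define c where "c = M *v axis (Inl a) 1"
    have "c \<notin> {w. inner k w = 0}" using a by (simp add: c_def vector_matrix_mult_component)
    then have "landing H c {w. inner k w = 0} \<in> null_sets \<mu>"
      by (rule null_landing[OF sg cl cn hm subspace_hyperplane])
    from AE_space[of \<mu>] AE_not_in[OF this] show ?thesis
      by eventually_elim (auto simp: space_haar[OF hm] landing_def zero_first_def c_def
          vector_matrix_mult_component matrix_vector_mul_assoc)
  qed simp
  then show ?thesis by (subst AE_ball_countable[OF countable_int_vecs]) blast
qed

text \<open>For h as in the previous lemma the inclusion of the first assertion is an equality:
  apply it to h^-1.\<close>

lemma lattice_zero_first_eq:
  fixes g :: "('d::finite + 'm::finite) asl"
  assumes g: "g \<in> ASL_R" and Hg: "is_Hg g H" and h: "h \<in> H"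
    and reflect: "\<forall>k\<in>int_vecs. k v* (fst h ** fst g) \<in> zero_first \<longrightarrow> k v* fst g \<in> zero_first"
  shows "diff_set (lattice_orbit g) \<inter> zero_first
           = diff_set (lattice_orbit (asl_mult h g)) \<inter> zero_first"
proof
  show "diff_set (lattice_orbit g) \<inter> zero_first
           \<subseteq> diff_set (lattice_orbit (asl_mult h g)) \<inter> zero_first"
    by (rule lattice_zero_first_mono[OF g Hg h])
next
  show "diff_set (lattice_orbit (asl_mult h g)) \<inter> zero_first
           \<subseteq> diff_set (lattice_orbit g) \<inter> zero_first"
  proof
    fix y assume "y \<in> diff_set (lattice_orbit (asl_mult h g)) \<inter> zero_first"
    then obtain k where k: "k \<in> int_vecs" "y = k v* (fst h ** fst g)" "y \<in> zero_first"
      unfolding diff_set_lattice_orbit by auto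
    have sg: "asl_subgroup H" using Hg by (simp add: is_Hg_def)
    have dg: "det (fst g) = 1" using g by (simp add: ASL_R_def)
    have dh: "det (fst h) = 1" by (rule asl_subgroupD(4)[OF sg h])
    have hi: "asl_inv h \<in> H" by (rule asl_subgroupD(3)[OF sg h])
    have kV: "k v* fst g \<in> zero_first" using reflect k by auto
    have hi_cl: "asl_inv h \<in> closure (set_prod ASL_Z (SL_image g))"
      using Hg_subset_closure[OF Hg] hi by blast
    have dhi: "det (fst (asl_inv h)) \<noteq> 0" using asl_subgroupD(4)[OF sg hi] by simp
    obtain k' where k': "k' \<in> int_vecs" "k' v* (matrix_inv (fst h) ** fst g) = k v* fst g"
      using closure_SL_orbit_integral_solution[OF dg hi_cl dhi k(1) kV] by auto
    then have "k' v* matrix_inv (fst h) = k"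
      using k'(2) vector_matrix_cancel[of "fst g" "k' v* matrix_inv (fst h)" k] dg
      by (simp add: vector_matrix_mul_assoc)
    then have "k' = k v* fst h"
      by (metis dh matrix_inv_det_nz(2) one_neq_zero vector_matrix_mul_assoc vector_matrix_mul_rid)
    then show "y \<in> diff_set (lattice_orbit g) \<inter> zero_first"
      unfolding diff_set_lattice_orbit using k k'(1)
      by (auto simp: vector_matrix_mul_assoc intro!: image_eqI[of _ _ k'])
  qed
qed

theorem proposition3p6:
  fixes g :: "('d::finite + 'm::finite) asl" and H :: "('d + 'm) asl set"
  assumes "g \<in> ASL_R"
    and "is_Hg g H"
  shows "(\<forall>h\<in>H. diff_set (lattice_orbit g) \<inter> zero_first
                 \<subseteq> diff_set (lattice_orbit (asl_mult h g)) \<inter> zero_first) \<and>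
         (\<forall>\<mu>. haar_measure H \<mu> \<longrightarrow>
            (AE h in \<mu>. diff_set (lattice_orbit g) \<inter> zero_first
                        = diff_set (lattice_orbit (asl_mult h g)) \<inter> zero_first))"
proof (intro conjI ballI allI impI)
  fix h assume "h \<in> H"
  then show "diff_set (lattice_orbit g) \<inter> zero_first
               \<subseteq> diff_set (lattice_orbit (asl_mult h g)) \<inter> zero_first"
    by (rule lattice_zero_first_mono[OF assms])
next
  fix \<mu> assume hm: "haar_measure H \<mu>"
  have sg: "asl_subgroup H" and cl: "closed H" and cn: "connected H"
    using assms(2) by (auto simp: is_Hg_def)
  from AE_space[of \<mu>] AE_zero_first_reflected[OF sg cl cn hm, of "fst g"]
  show "AE h in \<mu>. diff_set (lattice_orbit g) \<inter> zero_first
                     = diff_set (lattice_orbit (asl_mult h g)) \<inter> zero_first"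
    by eventually_elim (use lattice_zero_first_eq[OF assms] space_haar[OF hm] in blast)
qed

end
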